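(* Let $P_0$ be a distribution with a uniformly continuous density $p_0$ on $\mathbb{R}$, with distribution function $F_0\colon[-\infty,\infty]\to[0,1]$. For $u\in[0,1]$ define $F_0^{-1}(u) := \inf\{z\in[-\infty,\infty]:F_0(z)\ge u\}$ and $J_0(u) := (p_0\circ F_0^{-1})(u)$ (with $p_0(\pm\infty):=0$). Then both $J_0$ and its least concave majorant $\hat J_0$ on $[0,1]$ are continuous, with $p_0 = J_0\circ F_0$ on $\mathbb{R}$, and $\psi_0^* := \hat J_0^{(\mathrm{R})}\circ F_0$ is decreasing and right-continuous as a function from $\mathbb{R}$ to $[-\infty,\infty]$, provided that we set $\hat J_0^{(\mathrm{R})}(1) := \lim_{u\nearrow1}\hat J_0^{(\mathrm{R})}(u)$. Moreover, $\psi_0^*(z)\in\mathbb{R}$ if and only if $z\in\mathcal{S}_0$.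
   Context: $\hat J_0^{(\mathrm{R})}$ denotes the right derivative of $\hat J_0$. $\mathcal{S}_0 := (\inf\{z:p_0(z)>0\},\sup\{z:p_0(z)>0\})$. *)

theory Defs
  imports "HOL-Analysis.Analysis"
begin

definition cdf :: "(real \<Rightarrow> real) \<Rightarrow> real \<Rightarrow> real" where
  "cdf p z = integral {..z} p"

definition cdf_ext :: "(real \<Rightarrow> real) \<Rightarrow> ereal \<Rightarrow> real" where
  "cdf_ext p z = (if z = -\<infinity> then 0 else if z = \<infinity> then 1 else cdf p (real_of_ereal z))"

definition quantile :: "(real \<Rightarrow> real) \<Rightarrow> real \<Rightarrow> ereal" where
  "quantile p u = Inf {z::ereal. cdf_ext p z \<ge> u}"

definition dens_ext :: "(real \<Rightarrow> real) \<Rightarrow> ereal \<Rightarrow> real" where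
  "dens_ext p z = (if \<bar>z\<bar> = \<infinity> then 0 else p (real_of_ereal z))"

definition Jfun :: "(real \<Rightarrow> real) \<Rightarrow> real \<Rightarrow> real" where
  "Jfun p u = dens_ext p (quantile p u)"

definition lcm01 :: "(real \<Rightarrow> real) \<Rightarrow> real \<Rightarrow> real" where
  "lcm01 J u = Inf {g u | g. concave_on {0..1} g \<and> (\<forall>v\<in>{0..1}. J v \<le> g v)}"

definition right_deriv :: "(real \<Rightarrow> real) \<Rightarrow> real \<Rightarrow> ereal" where
  "right_deriv f u = Lim (at_right u) (\<lambda>v. ereal ((f v - f u) / (v - u)))"

definition right_deriv01 :: "(real \<Rightarrow> real) \<Rightarrow> real \<Rightarrow> ereal" where
  "right_deriv01 f u = (if u < 1 then right_deriv f u
                        else Lim (at_left 1) (right_deriv f))"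

definition psi_star :: "(real \<Rightarrow> real) \<Rightarrow> real \<Rightarrow> ereal" where
  "psi_star p z = right_deriv01 (lcm01 (Jfun p)) (cdf p z)"

text \<open>Interior of the support S_0 = (inf{z : p z > 0}, sup{z : p z > 0}), in the extended reals.\<close>
definition supp_int :: "(real \<Rightarrow> real) \<Rightarrow> real set" where
  "supp_int p = {z. Inf (ereal ` {x. p x > 0}) < ereal z \<and> ereal z < Sup (ereal ` {x. p x > 0})}"

end

theory Submission
  imports Defs
begin

text \<open>
  The distribution function \<open>F\<close> has derivative \<open>p\<close>, so \<open>p\<close> vanishes wherever \<open>F\<close> is locally
  constant and \<open>Jfun p u = p m\<close> for every \<open>m\<close> with \<open>F m = u\<close>; in particular \<open>p = Jfun p \<circ> F\<close>.
  On the compact sets \<open>F -` {c..d}\<close> with \<open>0 < c\<close>, \<open>d < 1\<close> the map \<open>F\<close> is a quotient map onto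
  \<open>{c..d}\<close>, so continuity of \<open>p\<close> descends to \<open>Jfun p\<close>; near \<open>0\<close> and \<open>1\<close>, uniform continuity
  forces \<open>p m\<close> to be small when \<open>F m\<close> is close to \<open>0\<close> or \<open>1\<close>.

  The least concave majorant of a continuous function on \<open>{0..1}\<close> is continuous and agrees with it
  at the endpoints, and the right derivative of a concave function is the supremum of its chord
  slopes to the right, hence antitone, right-continuous and finite inside the interval. Composing
  with the continuous monotone \<open>F\<close> gives monotonicity and right-continuity of \<open>psi_star p\<close>. If the
  right derivative of the majorant were finite at \<open>0\<close> (at \<open>1\<close>), then \<open>p \<le> C * F\<close>
  (\<open>p \<le> C * (1 - F)\<close>), and Gronwall's inequality would prevent \<open>F\<close> from ever vanishing (reaching
  \<open>1\<close>). So \<open>psi_star p z\<close> is finite exactly when \<open>0 < F z < 1\<close>, i.e. on the support interval.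
\<close>

section \<open>Right derivatives of concave functions\<close>

abbreviation chord_slope :: "(real \<Rightarrow> real) \<Rightarrow> real \<Rightarrow> real \<Rightarrow> real" where
  "chord_slope f x y \<equiv> (f y - f x) / (y - x)"

lemma concave_on_chord_slope_le:
  fixes f :: "real \<Rightarrow> real"
  assumes f: "concave_on I f" and I: "x \<in> I" "y \<in> I" and t: "x < t" "t < y"
  shows "chord_slope f x y \<le> chord_slope f x t" and "chord_slope f t y \<le> chord_slope f x y"
proof -
  have cvx: "convex_on I (\<lambda>x. - f x)" using f by (simp add: concave_on_def)
  have "chord_slope f x t = - ((- f x - - f t) / (x - t))"
    and "chord_slope f x y = - ((- f x - - f y) / (x - y))"
    and "chord_slope f t y = - ((- f t - - f y) / (t - y))"
    using t by (simp_all add: field_simps)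
  then show "chord_slope f x y \<le> chord_slope f x t" and "chord_slope f t y \<le> chord_slope f x y"
    using convex_on_slope_le[OF cvx I t] by simp_all
qed

context
  fixes f :: "real \<Rightarrow> real" and a b :: real
  assumes concave: "concave_on {a..b} f"
begin

lemma right_deriv_concave_eq_SUP:
  assumes "a \<le> u" "u < b"
  shows "right_deriv f u = (SUP v\<in>{u<..b}. ereal (chord_slope f u v))"
  unfolding right_deriv_def
proof (rule tendsto_Lim)
  let ?D = "SUP v\<in>{u<..b}. ereal (chord_slope f u v)"
  show "((\<lambda>v. ereal (chord_slope f u v)) \<longlongrightarrow> ?D) (at_right u)"
  proof (rule order_tendstoI)
    fix y assume "y < ?D"
    then obtain w where w: "w \<in> {u<..b}" "y < ereal (chord_slope f u w)"
      unfolding less_SUP_iff by blast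
    have "eventually (\<lambda>v. v \<in> {u<..<w}) (at_right u)"
      using w by (intro eventually_at_right_real) auto
    then show "eventually (\<lambda>v. y < ereal (chord_slope f u v)) (at_right u)"
    proof eventually_elim
      case (elim v)
      then have "chord_slope f u w \<le> chord_slope f u v"
        using concave_on_chord_slope_le(1)[OF concave, of u w v] w assms by auto
      with w(2) show ?case by (simp add: order_less_le_trans)
    qed
  next
    fix y assume "?D < y"
    have "eventually (\<lambda>v. v \<in> {u<..<b}) (at_right u)"
      using assms by (intro eventually_at_right_real) auto
    then show "eventually (\<lambda>v. ereal (chord_slope f u v) < y) (at_right u)"
    proof eventually_elim
      case (elim v)
      then have "ereal (chord_slope f u v) \<le> ?D" by (intro SUP_upper) auto
      with \<open>?D < y\<close> show ?case by simp
    qed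
  qed
qed simp

lemma chord_slope_le_right_deriv:
  assumes "a \<le> u" "u < v" "v \<le> b"
  shows "ereal (chord_slope f u v) \<le> right_deriv f u"
  unfolding right_deriv_concave_eq_SUP[OF assms(1) order_less_le_trans[OF assms(2,3)]]
  using assms by (intro SUP_upper) auto

lemma right_deriv_le_chord_slope:
  assumes "a \<le> u" "u < v" "v < b"
  shows "right_deriv f v \<le> ereal (chord_slope f u v)"
proof -
  have "right_deriv f v = (SUP w\<in>{v<..b}. ereal (chord_slope f v w))"
    using assms by (intro right_deriv_concave_eq_SUP) auto
  also have "\<dots> \<le> ereal (chord_slope f u v)"
  proof (rule SUP_least)
    fix w assume "w \<in> {v<..b}"
    then show "ereal (chord_slope f v w) \<le> ereal (chord_slope f u v)"
      using concave_on_chord_slope_le[OF concave, of u w v] assms by force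
  qed
  finally show ?thesis .
qed

lemma right_deriv_antimono:
  assumes "a \<le> u" "u \<le> v" "v < b"
  shows "right_deriv f v \<le> right_deriv f u"
proof (cases "u = v")
  case False
  then show ?thesis
    using right_deriv_le_chord_slope[of u v] chord_slope_le_right_deriv[of u v] assms by force
qed simp

lemma right_deriv_finite:
  assumes "a < u" "u < b"
  shows "\<bar>right_deriv f u\<bar> \<noteq> \<infinity>"
  using chord_slope_le_right_deriv[of u b] right_deriv_le_chord_slope[of a u] assms by auto

lemma right_deriv_continuous_within:
  assumes cont: "continuous_on {a..b} f" and u: "a \<le> u" "u < b"
  shows "continuous (at u within {u..<b}) (right_deriv f)"
proof -
  have near: "eventually (\<lambda>v. v \<in> {u..<b}) (at u within {u..<b})"
    by (simp add: eventually_at_filter)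
  show ?thesis
    unfolding continuous_within
  proof (rule order_tendstoI)
    fix y assume "y < right_deriv f u"
    then obtain w where w: "w \<in> {u<..b}" "y < ereal (chord_slope f u w)"
      unfolding right_deriv_concave_eq_SUP[OF u] less_SUP_iff by blast
    have "continuous_on {u..<b} f"
      using u by (intro continuous_on_subset[OF cont]) auto
    then have "(f \<longlongrightarrow> f u) (at u within {u..<b})"
      using u by (auto simp: continuous_on_def)
    then have "((\<lambda>v. ereal (chord_slope f v w)) \<longlongrightarrow> ereal (chord_slope f u w)) (at u within {u..<b})"
      using w by (intro lim_ereal[THEN iffD2] tendsto_intros) auto
    then have "eventually (\<lambda>v. y < ereal (chord_slope f v w)) (at u within {u..<b})"
      using w(2) by (rule order_tendstoD)
    moreover have "eventually (\<lambda>v. v < w) (at u within {u..<b})"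
      using w by (intro order_tendstoD(2)[OF tendsto_ident_at]) auto
    ultimately show "eventually (\<lambda>v. y < right_deriv f v) (at u within {u..<b})"
      using near
    proof eventually_elim
      case (elim v)
      then show ?case
        using chord_slope_le_right_deriv[of v w] u w by (auto intro: order_less_le_trans)
    qed
  next
    fix y assume "right_deriv f u < y"
    from near show "eventually (\<lambda>v. right_deriv f v < y) (at u within {u..<b})"
      by eventually_elim (use right_deriv_antimono[of u] u \<open>right_deriv f u < y\<close> in
          \<open>auto intro: order_le_less_trans\<close>)
  qed
qed

lemma right_deriv_tendsto_at_left:
  assumes "a < b"
  shows "(right_deriv f \<longlongrightarrow> (INF u\<in>{a..<b}. right_deriv f u)) (at_left b)"
proof (rule order_tendstoI)
  fix y assume "y < (INF u\<in>{a..<b}. right_deriv f u)"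
  then have "y < right_deriv f u" if "u \<in> {a<..<b}" for u
    using that by (auto simp: less_INF_D)
  moreover have "eventually (\<lambda>u. u \<in> {a<..<b}) (at_left b)"
    using assms by (intro eventually_at_left_real)
  ultimately show "eventually (\<lambda>u. y < right_deriv f u) (at_left b)"
    by (auto elim: eventually_mono)
next
  fix y assume "(INF u\<in>{a..<b}. right_deriv f u) < y"
  then obtain w where w: "w \<in> {a..<b}" "right_deriv f w < y"
    unfolding INF_less_iff by blast
  have "eventually (\<lambda>u. u \<in> {w<..<b}) (at_left b)"
    using w by (intro eventually_at_left_real) auto
  then show "eventually (\<lambda>u. right_deriv f u < y) (at_left b)"
  proof eventually_elim
    case (elim u)
    then have "right_deriv f u \<le> right_deriv f w"
      using w by (intro right_deriv_antimono) auto
    with w(2) show ?case by simp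
  qed
qed

lemma concave_le_affine_at_left_end:
  assumes "a < b" "right_deriv f a \<noteq> \<infinity>"
  obtains C where "\<And>v. v \<in> {a..b} \<Longrightarrow> f v \<le> f a + C * (v - a)"
proof -
  have "ereal (chord_slope f a b) \<le> right_deriv f a"
    using assms by (intro chord_slope_le_right_deriv) auto
  with assms obtain C where C: "right_deriv f a = ereal C"
    by (cases "right_deriv f a") auto
  have "f v \<le> f a + C * (v - a)" if "v \<in> {a..b}" for v
  proof (cases "v = a")
    case False
    then have "chord_slope f a v \<le> C"
      using chord_slope_le_right_deriv[of a v] that C by auto
    with False that show ?thesis by (simp add: divide_le_eq algebra_simps)
  qed simp
  then show ?thesis by (rule that)
qed

lemma concave_le_affine_at_right_end:
  assumes cont: "continuous_on {a..b} f" and "a < b"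
    and fin: "(INF u\<in>{a..<b}. right_deriv f u) \<noteq> -\<infinity>"
  obtains C where "\<And>v. v \<in> {a..b} \<Longrightarrow> f v \<le> f b + C * (b - v)"
proof -
  let ?m = "(a + b) / 2"
  have "(INF u\<in>{a..<b}. right_deriv f u) \<le> right_deriv f ?m"
    using \<open>a < b\<close> by (intro INF_lower) auto
  with right_deriv_finite[of ?m] fin \<open>a < b\<close> obtain L
    where L: "(INF u\<in>{a..<b}. right_deriv f u) = ereal L"
    by (cases "INF u\<in>{a..<b}. right_deriv f u") auto
  have "f u \<le> f b + (- L) * (b - u)" if u: "a \<le> u" "u < b" for u
  proof -
    have "L \<le> chord_slope f u v" if v: "u < v" "v < b" for v
    proof -
      have "ereal L \<le> right_deriv f v"
        unfolding L[symmetric] using u v by (intro INF_lower) auto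
      also have "\<dots> \<le> ereal (chord_slope f u v)"
        using u v by (intro right_deriv_le_chord_slope) auto
      finally show ?thesis by simp
    qed
    moreover have "(f \<longlongrightarrow> f b) (at_left b)"
      using cont \<open>a < b\<close> by (simp add: continuous_on_Icc_at_leftD)
    then have "((\<lambda>v. chord_slope f u v) \<longlongrightarrow> chord_slope f u b) (at_left b)"
      using u by (intro tendsto_intros) auto
    moreover have "eventually (\<lambda>v. v \<in> {u<..<b}) (at_left b)"
      using u by (intro eventually_at_left_real)
    ultimately have "L \<le> chord_slope f u b"
      by (intro tendsto_lowerbound) (auto elim: eventually_mono)
    with u show ?thesis by (simp add: le_divide_eq algebra_simps)
  qed
  then have "f v \<le> f b + (- L) * (b - v)" if "v \<in> {a..b}" for v
    using that by (cases "v = b") auto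
  then show ?thesis by (rule that)
qed

end

lemma right_deriv01_at_1:
  assumes "concave_on {0..1} f"
  shows "right_deriv01 f 1 = (INF u\<in>{0..<1}. right_deriv f u)"
  unfolding right_deriv01_def
  using right_deriv_tendsto_at_left[OF assms] by (simp add: tendsto_Lim)

lemma right_deriv01_antimono:
  assumes "concave_on {0..1} f" "0 \<le> u" "u \<le> v" "v \<le> 1"
  shows "right_deriv01 f v \<le> right_deriv01 f u"
proof (cases "v < 1")
  case True
  then show ?thesis
    using right_deriv_antimono[OF assms(1)] assms by (simp add: right_deriv01_def)
next
  case False
  then show ?thesis
    using assms right_deriv01_at_1[OF assms(1)] by (auto simp: right_deriv01_def intro: INF_lower)
qed

lemma right_deriv01_continuous_within:
  assumes "concave_on {0..1} f" "continuous_on {0..1} f" "0 \<le> u" "u \<le> 1"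
  shows "continuous (at u within {u..1}) (right_deriv01 f)"
proof (cases "u = 1")
  case False
  with assms have u: "u < 1" by simp
  have "at u within {u..1} = at u within {u..<1}"
    using u by (intro at_within_nhd[where S="{..<1}"]) auto
  moreover have "continuous (at u within {u..<1}) (right_deriv f)"
    using right_deriv_continuous_within[OF assms(1,2)] assms u by simp
  moreover have "eventually (\<lambda>v. right_deriv01 f v = right_deriv f v) (at u within {u..<1})"
    by (auto simp: eventually_at_filter right_deriv01_def)
  ultimately show ?thesis
    unfolding continuous_within using u by (simp add: tendsto_cong right_deriv01_def)
qed (simp add: continuous_within at_within_def)

section \<open>The least concave majorant on the unit interval\<close>

lemma concave_on_affine: "convex S \<Longrightarrow> concave_on S (\<lambda>v::real. \<alpha> + \<beta> * v)"
  by (rule concave_on_linorderI) (auto simp: algebra_simps)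

lemma bdd_above_image_compact:
  fixes f :: "'a::topological_space \<Rightarrow> real"
  assumes "continuous_on S f" "compact S"
  shows "bdd_above (f ` S)"
  using compact_imp_bounded[OF compact_continuous_image[OF assms]] by (rule bounded_imp_bdd_above)

lemma ex_concave_majorant:
  fixes j :: "real \<Rightarrow> real"
  assumes "bdd_above (j ` {0..1})"
  shows "\<exists>g. concave_on {0..1} g \<and> (\<forall>v\<in>{0..1}. j v \<le> g v)"
proof -
  obtain B where "\<forall>v\<in>{0..1}. j v \<le> B"
    using assms by (auto simp: bdd_above_def)
  then show ?thesis
    by (intro exI[of _ "\<lambda>_::real. B"]) (simp add: concave_on_const convex_real_interval)
qed

lemma lcm01_le:
  assumes "concave_on {0..1} g" "\<And>v. v \<in> {0..1} \<Longrightarrow> j v \<le> g v" "u \<in> {0..1}"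
  shows "lcm01 j u \<le> g u"
  unfolding lcm01_def
proof (rule cInf_lower)
  show "bdd_below {g u |g. concave_on {0..1} g \<and> (\<forall>v\<in>{0..1}. j v \<le> g v)}"
    using assms(3) by (intro bdd_belowI[of _ "j u"]) auto
qed (use assms in auto)

lemma lcm01_ge:
  assumes "bdd_above (j ` {0..1})" "u \<in> {0..1}"
  shows "j u \<le> lcm01 j u"
  unfolding lcm01_def using ex_concave_majorant[OF assms(1)] assms(2)
  by (intro cInf_greatest) auto

lemma concave_on_lcm01:
  assumes "bdd_above (j ` {0..1})"
  shows "concave_on {0..1} (lcm01 j)"
proof (rule concave_on_linorderI)
  fix t x y :: real
  assume t: "0 < t" "t < 1" and xy: "x \<in> {0..1}" "y \<in> {0..1}" "x < y"
  let ?z = "(1 - t) *\<^sub>R x + t *\<^sub>R y"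
  show "(1 - t) * lcm01 j x + t * lcm01 j y \<le> lcm01 j ?z"
    unfolding lcm01_def[of j ?z]
  proof (rule cInf_greatest)
    fix r assume "r \<in> {g ?z |g. concave_on {0..1} g \<and> (\<forall>v\<in>{0..1}. j v \<le> g v)}"
    then obtain g where g: "concave_on {0..1} g" "\<forall>v\<in>{0..1}. j v \<le> g v" "r = g ?z"
      by blast
    have "(1 - t) * lcm01 j x \<le> (1 - t) * g x" "t * lcm01 j y \<le> t * g y"
      using lcm01_le[OF g(1)] g(2) xy t by (auto intro!: mult_left_mono)
    moreover have "(1 - t) * g x + t * g y \<le> r"
      using concave_onD[OF g(1), of t x y] g(3) xy t by auto
    ultimately show "(1 - t) * lcm01 j x + t * lcm01 j y \<le> r" by linarith
  qed (use ex_concave_majorant[OF assms] in blast)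
qed (simp add: convex_real_interval)

lemma affine_majorant_near_endpoint:
  fixes j :: "real \<Rightarrow> real"
  assumes cont: "continuous_on {0..1} j" and c: "c \<in> {0, 1}" and "e > 0"
  obtains \<alpha> \<beta> :: real
  where "\<And>v. v \<in> {0..1} \<Longrightarrow> j v \<le> \<alpha> + \<beta> * v" and "\<alpha> + \<beta> * c = j c + e"
proof -
  have "\<exists>B. \<forall>v\<in>{0..1}. j v \<le> B"
    using bdd_above_image_compact[OF cont compact_Icc] by (auto simp: bdd_above_def)
  then obtain B where B: "\<And>v. v \<in> {0..1} \<Longrightarrow> j v \<le> B"
    by blast
  obtain \<delta> where \<delta>: "\<delta> > 0" "\<And>v. v \<in> {0..1} \<Longrightarrow> dist v c < \<delta> \<Longrightarrow> dist (j v) (j c) < e"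
    using cont c \<open>e > 0\<close> unfolding continuous_on_iff by (metis atLeastAtMost_iff empty_iff insert_iff zero_le_one order_refl)
  define b where "b = (B - j c) / \<delta>"
  define \<beta> where "\<beta> = (if c = 0 then b else - b)"
  have b: "b \<ge> 0" using B[of c] c \<delta>(1) by (auto simp: b_def)
  have "j v \<le> (j c + e - \<beta> * c) + \<beta> * v" if v: "v \<in> {0..1}" for v
  proof -
    have affine: "(j c + e - \<beta> * c) + \<beta> * v = j c + e + b * \<bar>v - c\<bar>"
      using c v by (auto simp: \<beta>_def algebra_simps)
    show ?thesis
    proof (cases "\<bar>v - c\<bar> < \<delta>")
      case True
      then have "j v < j c + e" using \<delta>(2)[OF v] by (auto simp: dist_real_def)
      with b show ?thesis unfolding affine by (smt (verit) mult_nonneg_nonneg abs_ge_zero)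
    next
      case False
      then have "b * \<delta> \<le> b * \<bar>v - c\<bar>"
        using b by (intro mult_left_mono) auto
      then have "B - j c \<le> b * \<bar>v - c\<bar>"
        using \<delta>(1) by (simp add: b_def)
      with B[OF v] \<open>e > 0\<close> show ?thesis unfolding affine by linarith
    qed
  qed
  then show ?thesis by (intro that[of "j c + e - \<beta> * c" \<beta>]) auto
qed

lemma lcm01_endpoint:
  assumes cont: "continuous_on {0..1} j" and c: "c \<in> {0, 1}"
  shows "lcm01 j c = j c"
proof (rule antisym)
  show "lcm01 j c \<le> j c"
  proof (rule field_le_epsilon)
    fix e :: real assume "e > 0"
    obtain \<alpha> \<beta> where
      maj: "\<And>v. v \<in> {0..1} \<Longrightarrow> j v \<le> \<alpha> + \<beta> * v" and at_c: "\<alpha> + \<beta> * c = j c + e"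
      using affine_majorant_near_endpoint[OF cont c \<open>e > 0\<close>] by blast
    have "lcm01 j c \<le> \<alpha> + \<beta> * c"
      using c by (intro lcm01_le[OF concave_on_affine maj]) (auto simp: convex_real_interval)
    with at_c show "lcm01 j c \<le> j c + e" by simp
  qed
  show "j c \<le> lcm01 j c"
    using c by (intro lcm01_ge bdd_above_image_compact[OF cont]) auto
qed

lemma lcm01_tendsto_endpoint:
  assumes cont: "continuous_on {0..1} j" and c: "c \<in> {0, 1}"
  shows "(lcm01 j \<longlongrightarrow> lcm01 j c) (at c within {0..1})"
proof -
  let ?G = "lcm01 j"
  have inside: "eventually (\<lambda>u. u \<in> {0..1}) (at c within {0..1})"
    by (simp add: eventually_at_filter)
  show ?thesis
  proof (rule order_tendstoI)
    fix y assume "y < ?G c"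
    have concave: "concave_on {0..1} ?G"
      by (intro concave_on_lcm01 bdd_above_image_compact[OF cont] compact_Icc)
    have "((\<lambda>u. (?G 1 - ?G 0) * u + ?G 0) \<longlongrightarrow> (?G 1 - ?G 0) * c + ?G 0) (at c within {0..1})"
      by (intro tendsto_intros)
    moreover have "(?G 1 - ?G 0) * c + ?G 0 = ?G c"
      using c by auto
    ultimately have "eventually (\<lambda>u. y < (?G 1 - ?G 0) * u + ?G 0) (at c within {0..1})"
      using \<open>y < ?G c\<close> by (auto intro: order_tendstoD)
    with inside show "eventually (\<lambda>u. y < ?G u) (at c within {0..1})"
      by eventually_elim (use concave_onD_Icc'[OF concave] in \<open>fastforce intro: order_less_le_trans\<close>)
  next
    fix y assume "?G c < y"
    then have "0 < (y - j c) / 2"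
      using lcm01_endpoint[OF cont c] by simp
    then obtain \<alpha> \<beta> where maj: "\<And>v. v \<in> {0..1} \<Longrightarrow> j v \<le> \<alpha> + \<beta> * v"
      and at_c: "\<alpha> + \<beta> * c = j c + (y - j c) / 2"
      using affine_majorant_near_endpoint[OF cont c] by blast
    have "((\<lambda>u. \<alpha> + \<beta> * u) \<longlongrightarrow> \<alpha> + \<beta> * c) (at c within {0..1})"
      by (intro tendsto_intros)
    moreover have "\<alpha> + \<beta> * c < y"
      using at_c \<open>?G c < y\<close> lcm01_endpoint[OF cont c] by (simp add: field_simps)
    ultimately have "eventually (\<lambda>u. \<alpha> + \<beta> * u < y) (at c within {0..1})"
      by (rule order_tendstoD)
    with inside show "eventually (\<lambda>u. ?G u < y) (at c within {0..1})"
    proof eventually_elim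
      case (elim u)
      then have "?G u \<le> \<alpha> + \<beta> * u"
        by (intro lcm01_le[OF concave_on_affine maj]) (auto simp: convex_real_interval)
      with elim show ?case by simp
    qed
  qed
qed

lemma continuous_on_lcm01:
  assumes cont: "continuous_on {0..1} j"
  shows "continuous_on {0..1} (lcm01 j)"
  unfolding continuous_on_def
proof
  fix u :: real assume u: "u \<in> {0..1}"
  show "(lcm01 j \<longlongrightarrow> lcm01 j u) (at u within {0..1})"
  proof (cases "u \<in> {0, 1}")
    case True
    then show ?thesis by (rule lcm01_tendsto_endpoint[OF cont])
  next
    case False
    have "convex_on {0..1} (\<lambda>v. - lcm01 j v)"
      unfolding concave_on_def[symmetric]
      by (intro concave_on_lcm01 bdd_above_image_compact[OF cont] compact_Icc)
    then have "continuous_on {0<..<1} (\<lambda>v. - (- lcm01 j v))"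
      by (intro continuous_on_minus convex_on_continuous) (auto intro: convex_on_subset)
    then have "isCont (lcm01 j) u"
      using u False by (simp add: continuous_on_eq_continuous_at)
    then show ?thesis
      by (metis continuous_at_imp_continuous_at_within continuous_within)
  qed
qed

section \<open>Distribution function and quantile density of a continuous density\<close>

lemma nonneg_integrable_on_lebesgue_set:
  fixes f :: "'a::euclidean_space \<Rightarrow> real"
  assumes "\<And>x. 0 \<le> f x" "f integrable_on UNIV" "S \<in> sets lebesgue"
  shows "f integrable_on S"
proof -
  have "f absolutely_integrable_on UNIV"
    using assms by (simp add: nonnegative_absolutely_integrable_1)
  then have "f absolutely_integrable_on S"
    by (rule set_integrable_subset) (use assms in auto)
  then show ?thesis
    using set_lebesgue_integral_eq_integral(1) by blast
qed

lemma nonneg_integral_tendsto_eventually_mem: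
  fixes f :: "'a::euclidean_space \<Rightarrow> real"
  assumes nonneg: "\<And>x. 0 \<le> f x" and int: "f integrable_on UNIV"
    and sets: "\<And>n. A n \<in> sets lebesgue"
    and mem: "\<And>x. eventually (\<lambda>n. x \<in> A n \<longleftrightarrow> x \<in> S) sequentially"
  shows "(\<lambda>n. integral (A n) f) \<longlonglongrightarrow> integral S f"
proof -
  have "(\<lambda>n. integral UNIV (\<lambda>x. if x \<in> A n then f x else 0))
      \<longlonglongrightarrow> integral UNIV (\<lambda>x. if x \<in> S then f x else 0)"
  proof (rule dominated_convergence(2)[where h = f])
    fix n show "(\<lambda>x. if x \<in> A n then f x else 0) integrable_on UNIV"
      using nonneg_integrable_on_lebesgue_set[OF nonneg int sets] integrable_restrict_UNIV by blast
  next
    fix x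
    have "eventually (\<lambda>n. (if x \<in> A n then f x else 0) = (if x \<in> S then f x else 0)) sequentially"
      using mem[of x] by eventually_elim simp
    then show "(\<lambda>n. if x \<in> A n then f x else 0) \<longlonglongrightarrow> (if x \<in> S then f x else 0)"
      by (rule tendsto_eventually)
  qed (use int nonneg in auto)
  then show ?thesis
    by (simp add: integral_restrict_UNIV)
qed

lemma continuous_on_compose_quotient_compact:
  fixes f :: "'a::t2_space \<Rightarrow> 'b::t2_space" and g :: "'b \<Rightarrow> 'c::topological_space"
  assumes "compact S" "continuous_on S f" "continuous_on S (g \<circ> f)"
  shows "continuous_on (f ` S) g"
  unfolding continuous_on_open
proof (intro allI impI)
  fix V assume "openin (top_of_set (g ` f ` S)) V"
  then have "openin (top_of_set S) (S \<inter> (g \<circ> f) -` V)"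
    using assms(3) unfolding continuous_on_open by (simp add: image_comp)
  moreover have "S \<inter> (g \<circ> f) -` V = S \<inter> f -` (f ` S \<inter> g -` V)"
    by auto
  ultimately show "openin (top_of_set (f ` S)) (f ` S \<inter> g -` V)"
    using Abstract_Topology_2.continuous_imp_quotient_map[OF assms(2) refl assms(1),
        of "f ` S \<inter> g -` V"] by (metis Int_lower1)
qed

lemma gronwall_zero:
  fixes G :: "real \<Rightarrow> real"
  assumes deriv: "\<And>x. (G has_real_derivative G' x) (at x)"
    and bound: "\<And>x. G' x \<le> C * G x" and "G z = 0" "z \<le> x"
  shows "G x \<le> 0"
proof -
  define h where "h x = G x * exp (- C * x)" for x
  have "(h has_real_derivative (G' y - C * G y) * exp (- C * y)) (at y)" for y
    unfolding h_def by (auto intro!: derivative_eq_intros deriv simp: algebra_simps)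
  moreover have "(G' y - C * G y) * exp (- C * y) \<le> 0" for y
    using bound[of y] by (simp add: mult_nonpos_nonneg)
  ultimately have "h x \<le> h z"
    by (metis DERIV_nonpos_imp_nonincreasing \<open>z \<le> x\<close>)
  with \<open>G z = 0\<close> show ?thesis
    by (simp add: h_def mult_le_0_iff)
qed

locale continuous_density =
  fixes p :: "real \<Rightarrow> real"
  assumes nonneg: "\<And>x. 0 \<le> p x"
    and integrable: "p integrable_on UNIV"
    and total: "integral UNIV p = 1"
    and continuous: "continuous_on UNIV p"
begin

abbreviation F :: "real \<Rightarrow> real" where
  "F \<equiv> cdf p"

lemma integrable_on_lebesgue_set: "S \<in> sets lebesgue \<Longrightarrow> p integrable_on S"
  using nonneg_integrable_on_lebesgue_set[OF nonneg integrable] .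

lemma cdf_split:
  assumes "x \<le> y"
  shows "F y = F x + integral {x..y} p"
proof -
  have "{..y} = {..x} \<union> {x..y}" and "{..x} \<inter> {x..y} = {x}"
    using assms by auto
  then show ?thesis
    unfolding cdf_def using integrable_on_lebesgue_set
    by (simp add: integral_Un)
qed

lemma cdf_has_real_derivative: "(F has_real_derivative p x) (at x)"
proof -
  have "((\<lambda>y. integral {x - 1..y} p) has_real_derivative p x) (at x within {x - 1..x + 1})"
    using continuous by (intro integral_has_real_derivative) (auto intro: continuous_on_subset)
  then have "((\<lambda>y. F (x - 1) + integral {x - 1..y} p) has_real_derivative p x) (at x)"
    by (subst (asm) at_within_interior) (auto intro!: derivative_eq_intros)
  then show ?thesis
  proof (rule has_field_derivative_transform_within_open[where S = "{x - 1<..}"])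
    fix y assume "y \<in> {x - 1<..}"
    then show "F (x - 1) + integral {x - 1..y} p = F y"
      using cdf_split[of "x - 1" y] by simp
  qed auto
qed

lemma isCont_cdf: "isCont F x"
  using cdf_has_real_derivative by (rule DERIV_isCont)

lemma continuous_on_cdf: "continuous_on S F"
  by (simp add: continuous_at_imp_continuous_on isCont_cdf)

lemma cdf_mono: "x \<le> y \<Longrightarrow> F x \<le> F y"
  using nonneg by (simp add: cdf_split integral_nonneg integrable_on_lebesgue_set)

lemma cdf_nonneg: "0 \<le> F x"
  unfolding cdf_def using nonneg by (simp add: integral_nonneg integrable_on_lebesgue_set)

lemma cdf_le_1: "F x \<le> 1"
  unfolding cdf_def total[symmetric]
  using nonneg integrable by (intro integral_subset_le) (auto simp: integrable_on_lebesgue_set)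

lemma cdf_mean_value:
  assumes "x < y"
  obtains \<xi> where "x < \<xi>" "\<xi> < y" "F y - F x = (y - x) * p \<xi>"
  using MVT2[OF assms, of F p] cdf_has_real_derivative that by blast

lemma cdf_tendsto_at_top: "(\<lambda>n. F (real n)) \<longlonglongrightarrow> 1"
proof -
  have "eventually (\<lambda>n. x \<in> {..real n} \<longleftrightarrow> x \<in> UNIV) sequentially" for x
    using eventually_ge_at_top[of "nat \<lceil>x\<rceil>"]
    by eventually_elim (use real_nat_ceiling_ge[of x] in \<open>auto dest!: of_nat_mono[where 'a=real]\<close>)
  then show ?thesis
    unfolding cdf_def total[symmetric]
    by (intro nonneg_integral_tendsto_eventually_mem nonneg integrable) auto
qed

lemma cdf_tendsto_at_bot: "(\<lambda>n. F (- real n)) \<longlonglongrightarrow> 0"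
proof -
  have "eventually (\<lambda>n. x \<in> {..- real n} \<longleftrightarrow> x \<in> {}) sequentially" for x
    using eventually_ge_at_top[of "nat \<lceil>- x\<rceil> + 1"]
    by eventually_elim (use real_nat_ceiling_ge[of "- x"] in \<open>auto dest!: of_nat_mono[where 'a=real]\<close>)
  then have "(\<lambda>n. integral {..- real n} p) \<longlonglongrightarrow> integral {} p"
    by (intro nonneg_integral_tendsto_eventually_mem nonneg integrable) auto
  then show ?thesis
    unfolding cdf_def by simp
qed

lemma ex_cdf_gt: "u < 1 \<Longrightarrow> \<exists>x. u < F x"
  using order_tendstoD(1)[OF cdf_tendsto_at_top] by (meson eventually_sequentially order_refl)

lemma ex_cdf_lt: "0 < u \<Longrightarrow> \<exists>x. F x < u"
  using order_tendstoD(2)[OF cdf_tendsto_at_bot] by (meson eventually_sequentially order_refl)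

lemma cdf_attains:
  assumes "0 < u" "u < 1"
  obtains x where "F x = u"
proof -
  obtain a b where "F a < u" "u < F b"
    using ex_cdf_lt ex_cdf_gt assms by blast
  moreover from this have "a \<le> b"
    using cdf_mono[of b a] by linarith
  ultimately show ?thesis
    using IVT'[of F a u b] continuous_on_cdf that by force
qed

lemma cdf_strict_mono_at:
  assumes "0 < p x"
  shows "y < x \<Longrightarrow> F y < F x" and "x < y \<Longrightarrow> F x < F y"
proof -
  obtain d where d: "d > 0" "\<And>h. 0 < h \<Longrightarrow> h < d \<Longrightarrow> F (x - h) < F x"
    using DERIV_pos_inc_left[OF cdf_has_real_derivative assms] by blast
  show "F y < F x" if "y < x"
  proof -
    let ?h = "min (d / 2) (x - y)"
    have "F y \<le> F (x - ?h)"
      by (intro cdf_mono) simp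
    also have "\<dots> < F x"
      using d that by (intro d(2)) auto
    finally show ?thesis .
  qed
  obtain d where d: "d > 0" "\<And>h. 0 < h \<Longrightarrow> h < d \<Longrightarrow> F x < F (x + h)"
    using DERIV_pos_inc_right[OF cdf_has_real_derivative assms] by blast
  show "F x < F y" if "x < y"
  proof -
    let ?h = "min (d / 2) (y - x)"
    have "F x < F (x + ?h)"
      using d that by (intro d(2)) auto
    also have "\<dots> \<le> F y"
      by (intro cdf_mono) simp
    finally show ?thesis .
  qed
qed

lemma cdf_strictly_between_if_density_pos:
  assumes "0 < p x"
  shows "0 < F x" "F x < 1"
  using cdf_strict_mono_at[OF assms, of "x - 1"] cdf_strict_mono_at[OF assms, of "x + 1"]
    cdf_nonneg[of "x - 1"] cdf_le_1[of "x + 1"] by auto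

lemma density_eq_if_cdf_eq:
  assumes "F x = F y"
  shows "p x = p y"
proof -
  have "p x = 0 \<and> p y = 0" if "x < y" "F x = F y" for x y
    using cdf_strict_mono_at[of x y] cdf_strict_mono_at[of y x] nonneg[of x] nonneg[of y] that
    by fastforce
  then show ?thesis
    using assms by (cases x y rule: linorder_cases) auto
qed

lemma quantile_eq_ereal:
  assumes "0 < u" "F m = u"
  obtains a where "quantile p u = ereal a" "F a = u"
proof -
  define S where "S = {w. u \<le> F w}"
  obtain L where L: "F L < u"
    using ex_cdf_lt assms(1) by blast
  have "m \<in> S" "closed S"
    using assms continuous_on_cdf by (auto simp: S_def intro: closed_Collect_le)
  moreover have "L \<le> w" if "w \<in> S" for w
    using that L cdf_mono[of w L] by (force simp: S_def)
  then have "bdd_below S"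
    by (rule bdd_belowI)
  ultimately have a: "Inf S \<in> S" "Inf S \<le> m"
    by (auto intro: closed_contains_Inf cInf_lower)
  have "quantile p u = ereal (Inf S)"
    unfolding quantile_def
  proof (rule antisym)
    show "Inf {z. u \<le> cdf_ext p z} \<le> ereal (Inf S)"
      using a(1) by (intro Inf_lower) (simp add: cdf_ext_def S_def)
    show "ereal (Inf S) \<le> Inf {z. u \<le> cdf_ext p z}"
    proof (rule Inf_greatest)
      fix z assume z: "z \<in> {z. u \<le> cdf_ext p z}"
      show "ereal (Inf S) \<le> z"
      proof (cases z)
        case (real r)
        then have "r \<in> S" using z by (simp add: cdf_ext_def S_def)
        then show ?thesis using real \<open>bdd_below S\<close> by (simp add: cInf_lower)
      qed (use z assms(1) in \<open>auto simp: cdf_ext_def\<close>)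
    qed
  qed
  moreover have "F (Inf S) = u"
    using a cdf_mono[of "Inf S" m] assms(2) by (simp add: S_def)
  ultimately show ?thesis by (rule that)
qed

lemma quantile_0: "quantile p 0 = -\<infinity>"
  unfolding quantile_def by (rule antisym, rule Inf_lower) (auto simp: cdf_ext_def)

lemma quantile_1_if_cdf_lt_1:
  assumes "\<And>x. F x < 1"
  shows "quantile p 1 = \<infinity>"
proof -
  have "{z. 1 \<le> cdf_ext p z} = {\<infinity>}"
  proof (intro set_eqI iffI)
    fix z assume "z \<in> {z. 1 \<le> cdf_ext p z}"
    then show "z \<in> {\<infinity>}"
      using assms by (cases z) (auto simp: cdf_ext_def not_le[symmetric])
  qed (simp add: cdf_ext_def)
  then show ?thesis
    unfolding quantile_def by simp
qed

lemma Jfun_eq_if_cdf_eq: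
  assumes "F m = u"
  shows "Jfun p u = p m"
proof (cases "u = 0")
  case True
  then have "p m = 0"
    using cdf_strictly_between_if_density_pos[of m] assms nonneg[of m] by fastforce
  with True show ?thesis
    by (simp add: Jfun_def dens_ext_def quantile_0)
next
  case False
  then obtain a where "quantile p u = ereal a" "F a = u"
    using quantile_eq_ereal[of u m] assms cdf_nonneg[of m] by force
  then show ?thesis
    using density_eq_if_cdf_eq[of a m] assms by (simp add: Jfun_def dens_ext_def)
qed

lemma density_eq_Jfun_cdf: "p z = Jfun p (F z)"
  by (simp add: Jfun_eq_if_cdf_eq)

lemma Jfun_nonneg: "0 \<le> Jfun p u"
  by (simp add: Jfun_def dens_ext_def nonneg)

lemma Jfun_0: "Jfun p 0 = 0"
  by (simp add: Jfun_def dens_ext_def quantile_0)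

lemma Jfun_1: "Jfun p 1 = 0"
proof (cases "\<exists>m. F m = 1")
  case True
  then obtain m where "F m = 1" by blast
  then show ?thesis
    using Jfun_eq_if_cdf_eq cdf_strictly_between_if_density_pos[of m] nonneg[of m] by fastforce
next
  case False
  then have "F x < 1" for x
    using cdf_le_1[of x] by fastforce
  then show ?thesis
    by (simp add: Jfun_def dens_ext_def quantile_1_if_cdf_lt_1)
qed

lemma compact_cdf_preimage:
  assumes "0 < c" "d < 1"
  shows "compact {x. c \<le> F x \<and> F x \<le> d}" (is "compact ?S")
proof -
  obtain L R where "F L < c" "d < F R"
    using ex_cdf_lt ex_cdf_gt assms by blast
  have "?S \<subseteq> {L..R}"
  proof
    fix x assume "x \<in> ?S"
    then have "\<not> x < L" "\<not> R < x"
      using cdf_mono[of x L] cdf_mono[of R x] \<open>F L < c\<close> \<open>d < F R\<close> by auto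
    then show "x \<in> {L..R}" by simp
  qed
  moreover have "closed ?S"
    using continuous_on_cdf by (intro closed_Collect_conj closed_Collect_le) auto
  ultimately show ?thesis
    by (metis bounded_closed_interval bounded_subset compact_eq_bounded_closed)
qed

lemma image_cdf_preimage:
  assumes "0 < c" "d < 1"
  shows "F ` {x. c \<le> F x \<and> F x \<le> d} = {c..d}"
proof
  show "{c..d} \<subseteq> F ` {x. c \<le> F x \<and> F x \<le> d}"
  proof
    fix v assume v: "v \<in> {c..d}"
    with assms obtain x where "F x = v"
      by (metis atLeastAtMost_iff cdf_attains order.strict_trans1 order.strict_trans2)
    with v show "v \<in> F ` {x. c \<le> F x \<and> F x \<le> d}" by auto
  qed
qed auto

lemma continuous_on_Jfun_Icc:
  assumes "0 < c" "d < 1"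
  shows "continuous_on {c..d} (Jfun p)"
proof -
  have "continuous_on {x. c \<le> F x \<and> F x \<le> d} (Jfun p \<circ> F)"
    using continuous by (auto simp: o_def density_eq_Jfun_cdf[symmetric] intro: continuous_on_subset)
  from continuous_on_compose_quotient_compact[OF compact_cdf_preimage[OF assms] continuous_on_cdf this]
  show ?thesis
    by (simp only: image_cdf_preimage[OF assms])
qed

lemma continuous_on_Jfun_interior: "continuous_on {0<..<1} (Jfun p)"
proof (intro continuous_at_imp_continuous_on ballI)
  fix u :: real assume "u \<in> {0<..<1}"
  then have "0 < u / 2" "u / 2 < u" "u < (1 + u) / 2" "(1 + u) / 2 < 1"
    by auto
  then show "isCont (Jfun p) u"
    by (intro continuous_on_interior[OF continuous_on_Jfun_Icc, of "u / 2" "(1 + u) / 2"]) auto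
qed

lemma cdf_pos_iff: "0 < F z \<longleftrightarrow> (\<exists>x<z. 0 < p x)"
proof
  assume "0 < F z"
  then obtain L where L: "F L < F z"
    using ex_cdf_lt by blast
  then have "L < z"
    using cdf_mono[of z L] by (meson linorder_not_le)
  then obtain \<xi> where "L < \<xi>" "\<xi> < z" "F z - F L = (z - L) * p \<xi>"
    by (rule cdf_mean_value)
  with L \<open>L < z\<close> show "\<exists>x<z. 0 < p x"
    by (metis diff_gt_0_iff_gt zero_less_mult_pos)
next
  assume "\<exists>x<z. 0 < p x"
  then obtain x where "x < z" "0 < p x" by blast
  then show "0 < F z"
    using cdf_strictly_between_if_density_pos(1)[of x] cdf_mono[of x z] by simp
qed

lemma cdf_lt_1_iff: "F z < 1 \<longleftrightarrow> (\<exists>x>z. 0 < p x)"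
proof
  assume "F z < 1"
  then obtain R where R: "F z < F R"
    using ex_cdf_gt by blast
  then have "z < R"
    using cdf_mono[of R z] by (meson linorder_not_le)
  then obtain \<xi> where "z < \<xi>" "\<xi> < R" "F R - F z = (R - z) * p \<xi>"
    by (rule cdf_mean_value)
  with R \<open>z < R\<close> show "\<exists>x>z. 0 < p x"
    by (metis diff_gt_0_iff_gt zero_less_mult_pos)
next
  assume "\<exists>x>z. 0 < p x"
  then obtain x where "z < x" "0 < p x" by blast
  then show "F z < 1"
    using cdf_strictly_between_if_density_pos(2)[of x] cdf_mono[of z x] by simp
qed

lemma supp_int_iff: "z \<in> supp_int p \<longleftrightarrow> 0 < F z \<and> F z < 1"
  unfolding supp_int_def cdf_pos_iff cdf_lt_1_iff Inf_less_iff less_Sup_iff by auto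

lemma cdf_pos_if_density_le_linear:
  assumes "\<And>x. p x \<le> C * F x"
  shows "0 < F z"
proof (rule ccontr)
  assume "\<not> 0 < F z"
  then have "F z = 0"
    using cdf_nonneg[of z] by simp
  obtain R where "0 < F R"
    using ex_cdf_gt[of 0] by auto
  moreover have "F (max R z) \<le> 0"
    using gronwall_zero[OF cdf_has_real_derivative assms \<open>F z = 0\<close>] by simp
  ultimately show False
    using cdf_mono[OF max.cobounded1[of R z]] by simp
qed

lemma cdf_lt_1_if_density_le_linear:
  assumes "\<And>x. p x \<le> C * (1 - F x)"
  shows "F z < 1"
proof (rule ccontr)
  assume "\<not> F z < 1"
  then have "F z = 1"
    using cdf_le_1[of z] by simp
  have "((\<lambda>x. F (- x)) has_real_derivative p (- x) * - 1) (at x)" for x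
    by (rule DERIV_chain2[where f = F and g = uminus])
      (auto intro: cdf_has_real_derivative derivative_eq_intros)
  then have "((\<lambda>x. 1 - F (- x)) has_real_derivative p (- x)) (at x)" for x
    using DERIV_diff[OF DERIV_const] by fastforce
  then have "1 - F (- x) \<le> 0" if "- z \<le> x" for x
    using that
    by (intro gronwall_zero[of "\<lambda>x. 1 - F (- x)" "\<lambda>x. p (- x)" C "- z" x])
      (use assms \<open>F z = 1\<close> in auto)
  then have "1 \<le> F y" if "y \<le> z" for y
    using that by (metis add.inverse_inverse diff_le_0_iff_le neg_le_iff_le)
  moreover obtain L where "F L < 1"
    using ex_cdf_lt[of 1] by auto
  ultimately show False
    using cdf_mono[OF min.cobounded1[of L z]] min.cobounded2[of L z] by fastforce
qed

end

section \<open>Uniformly continuous densities\<close>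

locale uniformly_continuous_density = continuous_density +
  assumes uniformly_continuous: "uniformly_continuous_on UNIV p"
begin

lemma cdf_bounded_away_where_density_large:
  assumes "0 < e"
  obtains d where "0 < d" "\<And>x. e \<le> p x \<Longrightarrow> d \<le> F x \<and> F x \<le> 1 - d"
proof -
  obtain \<eta> where \<eta>: "0 < \<eta>" "\<And>x y. dist y x < \<eta> \<Longrightarrow> dist (p y) (p x) < e / 2"
    using uniformly_continuous assms unfolding uniformly_continuous_on_def
    by (metis UNIV_I half_gt_zero)
  define h where "h = \<eta> / 2"
  have h: "0 < h" "h < \<eta>"
    using \<eta>(1) by (auto simp: h_def)
  have "h * (e / 2) \<le> F x \<and> F x \<le> 1 - h * (e / 2)" if "e \<le> p x" for x
  proof -
    have large: "e / 2 \<le> p \<xi>" if "x - h < \<xi>" "\<xi> < x + h" for \<xi>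
    proof -
      have "\<bar>x - \<xi>\<bar> < \<eta>"
        using that h by (auto simp: abs_less_iff)
      then have "\<bar>p x - p \<xi>\<bar> < e / 2"
        using \<eta>(2)[of \<xi> x] by (simp add: dist_real_def abs_minus_commute)
      with \<open>e \<le> p x\<close> show ?thesis
        by arith
    qed
    have "x - h < x" "x < x + h"
      using h by auto
    obtain \<xi> where "x - h < \<xi>" "\<xi> < x" "F x - F (x - h) = (x - (x - h)) * p \<xi>"
      using \<open>x - h < x\<close> by (rule cdf_mean_value)
    then have "h * (e / 2) \<le> F x - F (x - h)"
      using large[of \<xi>] h by (simp add: mult_left_mono)
    moreover obtain \<xi>' where "x < \<xi>'" "\<xi>' < x + h" "F (x + h) - F x = (x + h - x) * p \<xi>'"
      using \<open>x < x + h\<close> by (rule cdf_mean_value)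
    then have "h * (e / 2) \<le> F (x + h) - F x"
      using large[of \<xi>'] h by (simp add: mult_left_mono)
    ultimately show ?thesis
      using cdf_nonneg[of "x - h"] cdf_le_1[of "x + h"] by linarith
  qed
  then show ?thesis
    using that[of "h * (e / 2)"] h assms by simp
qed

lemma Jfun_small_near_endpoints:
  assumes "0 < e"
  obtains d where "0 < d" "\<And>u. u \<in> {0..1} \<Longrightarrow> u < d \<or> 1 - d < u \<Longrightarrow> Jfun p u < e"
proof -
  obtain d where d: "0 < d" "\<And>x. e \<le> p x \<Longrightarrow> d \<le> F x \<and> F x \<le> 1 - d"
    using cdf_bounded_away_where_density_large[OF assms] by blast
  have "Jfun p u < e" if u: "u \<in> {0..1}" "u < d \<or> 1 - d < u" for u
  proof (cases "u = 0 \<or> u = 1")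
    case True
    then show ?thesis using assms Jfun_0 Jfun_1 by auto
  next
    case False
    with u obtain m where "F m = u"
      using cdf_attains[of u] by force
    then show ?thesis
      using d(2)[of m] u Jfun_eq_if_cdf_eq by force
  qed
  with d(1) show ?thesis by (rule that)
qed

lemma continuous_on_Jfun: "continuous_on {0..1} (Jfun p)"
  unfolding continuous_on_def
proof
  fix u :: real assume u: "u \<in> {0..1}"
  show "(Jfun p \<longlongrightarrow> Jfun p u) (at u within {0..1})"
  proof (cases "u = 0 \<or> u = 1")
    case True
    then have "Jfun p u = 0"
      using Jfun_0 Jfun_1 by auto
    show ?thesis
    proof (rule order_tendstoI)
      fix y assume "y < Jfun p u"
      then show "eventually (\<lambda>v. y < Jfun p v) (at u within {0..1})"
        using \<open>Jfun p u = 0\<close> Jfun_nonneg by (intro always_eventually) (auto intro: order_less_le_trans)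
    next
      fix y assume "Jfun p u < y"
      then obtain d where d: "0 < d" "\<And>v. v \<in> {0..1} \<Longrightarrow> v < d \<or> 1 - d < v \<Longrightarrow> Jfun p v < y"
        using Jfun_small_near_endpoints \<open>Jfun p u = 0\<close> by (metis)
      have "eventually (\<lambda>v. dist v u < d) (at u within {0..1})"
        using d(1) by (auto simp: eventually_at)
      moreover have "eventually (\<lambda>v. v \<in> {0..1}) (at u within {0..1})"
        by (simp add: eventually_at_filter)
      ultimately show "eventually (\<lambda>v. Jfun p v < y) (at u within {0..1})"
        by eventually_elim (use True d(2) in \<open>auto simp: dist_real_def\<close>)
    qed
  next
    case False
    with u have "isCont (Jfun p) u"
      using continuous_on_Jfun_interior by (simp add: continuous_on_eq_continuous_at)
    then show ?thesis
      by (metis continuous_at_imp_continuous_at_within continuous_within)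
  qed
qed

abbreviation Jhat :: "real \<Rightarrow> real" where
  "Jhat \<equiv> lcm01 (Jfun p)"

lemma concave_on_Jhat: "concave_on {0..1} Jhat"
  by (intro concave_on_lcm01 bdd_above_image_compact[OF continuous_on_Jfun] compact_Icc)

lemma Jfun_le_Jhat: "u \<in> {0..1} \<Longrightarrow> Jfun p u \<le> Jhat u"
  by (intro lcm01_ge bdd_above_image_compact[OF continuous_on_Jfun] compact_Icc)

lemma psi_star_antimono: "x \<le> y \<Longrightarrow> psi_star p y \<le> psi_star p x"
  unfolding psi_star_def
  by (intro right_deriv01_antimono concave_on_Jhat cdf_nonneg cdf_mono cdf_le_1)

lemma psi_star_continuous_at_right: "continuous (at_right z) (psi_star p)"
proof -
  have "continuous (at z within {z..}) F"
    using isCont_cdf by (rule continuous_at_imp_continuous_at_within)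
  moreover have "continuous (at (F z) within {F z..1}) (right_deriv01 Jhat)"
    using concave_on_Jhat continuous_on_lcm01[OF continuous_on_Jfun] cdf_nonneg cdf_le_1
    by (rule right_deriv01_continuous_within)
  then have "continuous (at (F z) within F ` {z..}) (right_deriv01 Jhat)"
    by (rule continuous_within_subset) (auto intro: cdf_mono cdf_le_1)
  ultimately have "continuous (at z within {z..}) (psi_star p)"
    unfolding psi_star_def by (rule continuous_within_compose2)
  then show ?thesis
    by (rule continuous_within_subset) auto
qed

lemma right_deriv_Jhat_0:
  assumes "F z = 0"
  shows "right_deriv Jhat 0 = \<infinity>"
proof (rule ccontr)
  assume "right_deriv Jhat 0 \<noteq> \<infinity>"
  then obtain C where C: "\<And>v. v \<in> {0..1} \<Longrightarrow> Jhat v \<le> Jhat 0 + C * (v - 0)"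
    using concave_le_affine_at_left_end[OF concave_on_Jhat] by force
  have "p x \<le> C * F x" for x
    using Jfun_le_Jhat[of "F x"] C[of "F x"] cdf_nonneg[of x] cdf_le_1[of x]
      lcm01_endpoint[OF continuous_on_Jfun, of 0] Jfun_0
    by (simp add: density_eq_Jfun_cdf[symmetric])
  then have "0 < F z"
    by (rule cdf_pos_if_density_le_linear)
  with assms show False by simp
qed

lemma right_deriv01_Jhat_1:
  assumes "F z = 1"
  shows "right_deriv01 Jhat 1 = -\<infinity>"
  unfolding right_deriv01_at_1[OF concave_on_Jhat]
proof (rule ccontr)
  assume "(INF u\<in>{0..<1}. right_deriv Jhat u) \<noteq> -\<infinity>"
  then obtain C where C: "\<And>v. v \<in> {0..1} \<Longrightarrow> Jhat v \<le> Jhat 1 + C * (1 - v)"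
    using concave_le_affine_at_right_end[OF concave_on_Jhat continuous_on_lcm01[OF continuous_on_Jfun]]
    by force
  have "p x \<le> C * (1 - F x)" for x
    using Jfun_le_Jhat[of "F x"] C[of "F x"] cdf_nonneg[of x] cdf_le_1[of x]
      lcm01_endpoint[OF continuous_on_Jfun, of 1] Jfun_1
    by (simp add: density_eq_Jfun_cdf[symmetric])
  then have "F z < 1"
    by (rule cdf_lt_1_if_density_le_linear)
  with assms show False by simp
qed

lemma psi_star_finite_iff: "\<bar>psi_star p z\<bar> \<noteq> \<infinity> \<longleftrightarrow> z \<in> supp_int p"
  unfolding psi_star_def supp_int_iff
proof -
  consider "F z = 0" | "F z = 1" | "0 < F z" "F z < 1"
    using cdf_nonneg[of z] cdf_le_1[of z] by fastforce
  then show "\<bar>right_deriv01 Jhat (F z)\<bar> \<noteq> \<infinity> \<longleftrightarrow> 0 < F z \<and> F z < 1"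
  proof cases
    case 1
    then show ?thesis
      using right_deriv_Jhat_0 by (simp add: right_deriv01_def)
  next
    case 2
    then show ?thesis
      using right_deriv01_Jhat_1 by simp
  next
    case 3
    then show ?thesis
      using right_deriv_finite[OF concave_on_Jhat] by (simp add: right_deriv01_def)
  qed
qed

end

theorem lemma2p1:
  fixes p :: "real \<Rightarrow> real"
  assumes nonneg: "\<And>x. p x \<ge> 0"
    and integrable: "p integrable_on UNIV"
    and total: "integral UNIV p = 1"
    and unif: "uniformly_continuous_on UNIV p"
  shows "continuous_on {0..1} (Jfun p)
    \<and> continuous_on {0..1} (lcm01 (Jfun p))
    \<and> (\<forall>z. p z = Jfun p (cdf p z))
    \<and> (\<forall>x y. x \<le> y \<longrightarrow> psi_star p y \<le> psi_star p x)
    \<and> (\<forall>z. continuous (at_right z) (psi_star p))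
    \<and> (\<forall>z. (\<bar>psi_star p z\<bar> \<noteq> \<infinity>) \<longleftrightarrow> z \<in> supp_int p)"
proof -
  interpret uniformly_continuous_density p
    using assms uniformly_continuous_imp_continuous by unfold_locales auto
  show ?thesis
    using continuous_on_Jfun continuous_on_lcm01[OF continuous_on_Jfun] density_eq_Jfun_cdf
      psi_star_antimono psi_star_continuous_at_right psi_star_finite_iff
    by blast
qed

end
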